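(* Let $(x^k)$ be generated by the augmented Lagrangian method described below, where each step satisfies the inexactness assumption described below with $\varepsilon_k\downarrow0$, and let $\bar x$ be a limit point of $(x^k)$ along some subsequence $K\subset\mathbb{N}$ (i.e. $x^k\to_K\bar x$). If $\bar x$ is feasible for the GNEP (i.e. $g^\nu(\bar x)\le0$ and $h^\nu(\bar x)\le0$ for all $\nu$), then for every $\nu$ $$\nabla_{x^\nu}\theta_\nu(x^k)+\nabla_{x^\nu}g^\nu(x^k)\lambda^{\nu,k}+\nabla_{x^\nu}h^\nu(x^k)\mu^{\nu,k}\to_K0,$$ $$\min\{-g^\nu(x^k),\lambda^{\nu,k}\}\to_K0,\qquad\min\{-h^\nu(x^k),\mu^{\nu,k}\}\to_K0.$$
   Context: GNEP: $N$ players, variables $x=(x^1,\ldots,x^N)\in\mathbb{R}^n$, $x^\nu\in\mathbb{R}^{n_\nu}$. Player $\nu$ solves $\min_{x^\nu}\theta_\nu(x)$ s.t. $g^\nu(x)\le0$, $h^\nu(x)\le0$, with continuously differentiable $\theta_\nu:\mathbb{R}^n\to\mathbb{R}$, $g^\nu:\mathbb{R}^n\to\mathbb{R}^{m_\nu}$, $h^\nu:\mathbb{R}^n\to\mathbb{R}^{p_\nu}$ ($p_\nu=0$ allowed); $m=\sum m_\nu$, $p=\sum p_\nu$. Notation: $v_+=\max\{0,v\}$ componentwise; $\nabla f$ = transposed Jacobian, $\nabla_{x^\nu}f$ its rows for $x^\nu$; $\min$ componentwise; Euclidean norms; $\to_K$ = convergence along $k\in K$. Vectors in $\mathbb{R}^m$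 (resp. $\mathbb{R}^p$) are split into player blocks $\lambda^{\nu}\in\mathbb{R}^{m_\nu}$ (resp. $\mu^\nu\in\mathbb{R}^{p_\nu}$). Augmented Lagrangian of player $\nu$: $L_a^\nu(x,u;\rho)=\theta_\nu(x)+\frac{\rho}{2}\|(g^\nu(x)+u/\rho)_+\|^2$. Method: choose $x^0\in\mathbb{R}^n,\lambda^0\in\mathbb{R}^m,\mu^0\in\mathbb{R}^p$, an initial $u^0\in\mathbb{R}^m$, $u^{\max}\ge0$, and for each $\nu$: $\tau_\nu\in(0,1)$, $\gamma_\nu>1$, $\rho_{\nu,0}>0$. For $k=0,1,2,\dots$ (the method is assumed to run forever): (1) compute $(x^{k+1},\mu^{k+1})\in\mathbb{R}^{n+p}$ satisfying the inexactness assumption; (2) $\lambda^{\nu,k+1}=(u^{\nu,k}+\rho_{\nu,k}g^\nu(x^{k+1}))_+$; (3) for each $\nu$: if $\|\min\{-g^\nu(x^{k+1}),\lambda^{\nu,k+1}\}\|\le\tau_\nu\|\min\{-g^\nu(x^k),\lambda^{\nu,k}\}\|$ then $\rho_{\nu,k+1}=\rho_{\nu,k}$, else $\rho_{\nu,k+1}=\gamma_\nu\rho_{\nu,k}$; (4) $u^{k+1}=\min\{\lambda^{k+1},u^{\max}\}$ componentwise. Inexactness assumption: for all $k,\nu$, $\|\nabla_{x^\nu}L_a^\nu(x^{k+1},u^{\nu,k};\rho_{\nu,k})+\nabla_{x^\nu}h^\nu(x^{k+1})\mu^{\nu,k+1}\|\le\varepsilon_k$ and $\|\min\{-h^\nu(x^{k+1}),\mu^{\nu,k+1}\}\|\le\varepsilon_k'$,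 with $(\varepsilon_k)\subset[0,\infty)$ bounded and $\varepsilon'_k\to0$. *)

theory Defs
  imports "HOL-Analysis.Analysis"
begin

definition C1_fun :: "(real^'n \<Rightarrow> real) \<Rightarrow> bool" where
  "C1_fun f \<longleftrightarrow> (\<exists>f'. continuous_on UNIV f' \<and>
      (\<forall>x. (f has_derivative blinfun_apply (f' x)) (at x)))"

definition pgrad :: "(real^'n \<Rightarrow> real) \<Rightarrow> real^'n \<Rightarrow> 'n \<Rightarrow> real" where
  "pgrad f x i = frechet_derivative f (at x) (axis i 1)"

definition pos :: "real \<Rightarrow> real" where
  "pos v = max 0 v"

definition bnorm :: "'i set \<Rightarrow> ('i \<Rightarrow> real) \<Rightarrow> real" where
  "bnorm I v = sqrt (\<Sum>i\<in>I. (v i)^2)"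

definition aug_lag :: "(real^'n \<Rightarrow> real) \<Rightarrow> nat \<Rightarrow> (nat \<Rightarrow> real^'n \<Rightarrow> real)
    \<Rightarrow> real^'n \<Rightarrow> (nat \<Rightarrow> real) \<Rightarrow> real \<Rightarrow> real" where
  "aug_lag th mm gg x u r = th x + r / 2 * (bnorm {..<mm} (\<lambda>j. pos (gg j x + u j / r)))^2"

end

theory Submission
  imports Defs
begin

(* The gradient of player nu's augmented Lagrangian at x^(k+1) is the gradient of the ordinary
   Lagrangian with the updated multiplier lambda^(nu,k+1). Hence the inexactness conditions bound
   the stationarity and h-complementarity residuals at step k+1 by eps_k and eps'_k, and these
   tend to 0. For g-complementarity, the penalty rho_nu is either eventually constant, and then
   the test of step (3) makes the residual decay geometrically, or it tends to infinity. In the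
   second case an inactive constraint, g_j(xbar) < 0, eventually has u_j + rho g_j < 0 because u
   is bounded, so lambda_j = 0. For an active one, |min(-g_j, lambda_j)| <= |g_j| -> 0. *)

lemma C1_fun_differentiable: "C1_fun f \<Longrightarrow> f differentiable (at x)"
  unfolding C1_fun_def differentiable_def by blast

lemma C1_fun_isCont: "C1_fun f \<Longrightarrow> isCont f x"
  using C1_fun_differentiable differentiable_imp_continuous_within by blast

lemma pos_square_eq: "(pos t)\<^sup>2 = t * pos t"
  by (simp add: pos_def max_def power2_eq_square)

lemma pos_square_has_real_derivative: "((\<lambda>t. (pos t)\<^sup>2) has_real_derivative 2 * pos t) (at t)"
proof -
  consider "t > 0" | "t < 0" | "t = 0" by linarith
  then show ?thesis
  proof cases
    case 1
    have "((\<lambda>t. t\<^sup>2) has_real_derivative 2 * pos t) (at t)"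
      using 1 by (auto intro!: derivative_eq_intros simp: pos_def)
    then show ?thesis
      by (rule has_field_derivative_transform_within_open[where S="{0<..}"])
         (use 1 in \<open>auto simp: pos_def\<close>)
  next
    case 2
    have "((\<lambda>t. 0) has_real_derivative 2 * pos t) (at t)"
      using 2 by (auto intro!: derivative_eq_intros simp: pos_def)
    then show ?thesis
      by (rule has_field_derivative_transform_within_open[where S="{..<0}"])
         (use 2 in \<open>auto simp: pos_def\<close>)
  next
    case 3
    have "isCont pos 0"
      unfolding pos_def[abs_def] by (intro continuous_intros)
    then have "(pos \<longlongrightarrow> 0) (at 0)"
      by (simp add: isCont_def pos_def)
    moreover have "\<forall>\<^sub>F y in at 0. pos y = ((pos y)\<^sup>2 - (pos 0)\<^sup>2) / (y - 0)"
      by (auto simp: eventually_at_filter pos_square_eq)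
    ultimately show ?thesis
      using 3 by (simp add: has_field_derivative_iff tendsto_cong pos_def)
  qed
qed

lemma mult_pos_add_divide: "(r::real) > 0 \<Longrightarrow> r * pos (a + b / r) = pos (b + r * a)"
  unfolding pos_def by (simp add: max_mult_distrib_left distrib_left mult.commute)

lemma pgrad_aug_lag:
  assumes th: "th differentiable (at x)" and gg: "\<And>j. j < mm \<Longrightarrow> gg j differentiable (at x)"
    and r: "r > 0"
  shows "pgrad (\<lambda>y. aug_lag th mm gg y u r) x c =
     pgrad th x c + (\<Sum>j<mm. pgrad (gg j) x c * pos (u j + r * gg j x))"
proof -
  define D where "D f = frechet_derivative f (at x)" for f :: "real^'a \<Rightarrow> real"
  have aug_lag_eq: "(\<lambda>y. aug_lag th mm gg y u r) =
      (\<lambda>y. th y + r/2 * (\<Sum>j<mm. (pos (gg j y + u j / r))\<^sup>2))"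
    unfolding aug_lag_def bnorm_def by (simp add: sum_nonneg)
  have "((\<lambda>y. th y + r/2 * (\<Sum>j<mm. (pos (gg j y + u j / r))\<^sup>2)) has_derivative
      (\<lambda>v. D th v + r/2 * (\<Sum>j<mm. 2 * pos (gg j x + u j / r) * D (gg j) v))) (at x)"
  proof (intro has_derivative_add has_derivative_mult_right has_derivative_sum)
    show "(th has_derivative D th) (at x)"
      using th by (simp add: D_def frechet_derivative_works)
    fix j assume "j \<in> {..<mm}"
    then have "((\<lambda>y. gg j y + u j / r) has_derivative D (gg j)) (at x)"
      using gg by (auto intro!: has_derivative_add_const simp: D_def frechet_derivative_works)
    from has_derivative_compose[OF this pos_square_has_real_derivative[unfolded has_field_derivative_def]]
    show "((\<lambda>y. (pos (gg j y + u j / r))\<^sup>2) has_derivative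
        (\<lambda>v. 2 * pos (gg j x + u j / r) * D (gg j) v)) (at x)"
      by (simp add: o_def mult.assoc)
  qed
  then have "pgrad (\<lambda>y. aug_lag th mm gg y u r) x c =
     D th (axis c 1) + r/2 * (\<Sum>j<mm. 2 * pos (gg j x + u j / r) * D (gg j) (axis c 1))"
    unfolding pgrad_def aug_lag_eq D_def by (simp add: frechet_derivative_at[symmetric])
  also have "\<dots> = pgrad th x c + (\<Sum>j<mm. pgrad (gg j) x c * pos (u j + r * gg j x))"
    unfolding pgrad_def D_def sum_distrib_left
    by (intro arg_cong2[where f="(+)"] refl sum.cong) (use r mult_pos_add_divide in \<open>auto simp: field_simps\<close>)
  finally show ?thesis .
qed

lemma bnorm_nonneg: "0 \<le> bnorm I v"
  unfolding bnorm_def by (simp add: sum_nonneg)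

lemma tendsto_bnorm_zero:
  assumes "finite I" "\<And>j. j \<in> I \<Longrightarrow> ((\<lambda>i. v i j) \<longlongrightarrow> 0) F"
  shows "((\<lambda>i. bnorm I (v i)) \<longlongrightarrow> 0) F"
proof -
  have "((\<lambda>i. sqrt (\<Sum>j\<in>I. (v i j)\<^sup>2)) \<longlongrightarrow> sqrt (\<Sum>j\<in>I. 0\<^sup>2)) F"
    using assms by (intro tendsto_intros) auto
  then show ?thesis unfolding bnorm_def by simp
qed

lemma subseq_tendsto_zero_of_Suc_le:
  fixes R e :: "nat \<Rightarrow> real"
  assumes "\<And>k. 0 \<le> R k" "\<And>k. R (Suc k) \<le> e k" "e \<longlonglongrightarrow> 0" "strict_mono s"
  shows "(\<lambda>i. R (s i)) \<longlonglongrightarrow> 0"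
proof -
  have "(\<lambda>k. R (Suc k)) \<longlonglongrightarrow> 0"
    by (rule tendsto_sandwich[OF _ _ tendsto_const assms(3)]) (simp_all add: assms(1,2))
  then have "R \<longlonglongrightarrow> 0" by (rule LIMSEQ_imp_Suc)
  from LIMSEQ_subseq_LIMSEQ[OF this assms(4)] show ?thesis by (simp add: o_def)
qed

lemma tendsto_zero_of_eventually_contracting:
  fixes B :: "nat \<Rightarrow> real"
  assumes nonneg: "\<And>k. 0 \<le> B k" and "0 \<le> q" "q < 1"
    and contr: "\<And>k. k \<ge> k0 \<Longrightarrow> B (Suc k) \<le> q * B k"
  shows "B \<longlonglongrightarrow> 0"
proof -
  have geometric: "B (n + k0) \<le> q ^ n * B k0" for n
  proof (induction n)
    case (Suc n)
    have "B (Suc n + k0) \<le> q * B (n + k0)" using contr[of "n + k0"] by simp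
    also have "\<dots> \<le> q * (q ^ n * B k0)" using Suc \<open>0 \<le> q\<close> by (rule mult_left_mono)
    finally show ?case by simp
  qed simp
  have bound_limit: "(\<lambda>n. q ^ n * B k0) \<longlonglongrightarrow> 0"
    using assms(2,3) by (intro tendsto_mult_left_zero LIMSEQ_power_zero) simp
  have "(\<lambda>n. B (n + k0)) \<longlonglongrightarrow> 0"
    by (rule tendsto_sandwich[OF _ _ tendsto_const bound_limit]) (simp_all add: nonneg geometric)
  then show ?thesis by (rule LIMSEQ_offset)
qed

lemma penalty_update_pos:
  fixes r :: "nat \<Rightarrow> real"
  assumes "0 < r 0" "1 < \<gamma>" "\<And>k. r (Suc k) = (if P k then r k else \<gamma> * r k)"
  shows "0 < r k"
proof (induction k)
  case (Suc k)
  then show ?case using assms(2) assms(3)[of k] by simp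
qed (rule assms(1))

lemma penalty_update_incseq:
  fixes r :: "nat \<Rightarrow> real"
  assumes "0 < r 0" "1 < \<gamma>" "\<And>k. r (Suc k) = (if P k then r k else \<gamma> * r k)"
  shows "incseq r"
proof (rule incseq_SucI)
  fix k show "r k \<le> r (Suc k)"
    using assms(3)[of k] penalty_update_pos[of r \<gamma> P k, OF assms] \<open>1 < \<gamma>\<close> by simp
qed

lemma penalty_update_eventually_const_or_at_top:
  fixes r :: "nat \<Rightarrow> real"
  assumes "0 < r 0" "1 < \<gamma>" and upd: "\<And>k. r (Suc k) = (if P k then r k else \<gamma> * r k)"
  shows "(\<exists>k0. \<forall>k\<ge>k0. P k) \<or> filterlim r at_top sequentially"
proof (cases "\<exists>k0. \<forall>k\<ge>k0. P k")
  case never_const: False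
  have increase: "\<exists>k\<ge>k0. r (Suc k) = \<gamma> * r k" for k0
  proof -
    obtain k where "k \<ge> k0" "\<not> P k" using never_const by blast
    then show ?thesis using upd[of k] by auto
  qed
  have inc: "incseq r" using penalty_update_incseq[of r \<gamma> P, OF assms] .
  have power_bound: "\<exists>k. r 0 * \<gamma> ^ n \<le> r k" for n
  proof (induction n)
    case (Suc n)
    then obtain k where k: "r 0 * \<gamma> ^ n \<le> r k" by blast
    obtain k' where k': "k' \<ge> k" "r (Suc k') = \<gamma> * r k'" using increase by blast
    have "r 0 * \<gamma> ^ Suc n \<le> \<gamma> * r k'"
      using k inc[THEN monoD, OF k'(1)] \<open>1 < \<gamma>\<close> by (simp add: mult.left_commute)
    then show ?case using k'(2) by metis
  qed auto
  have "filterlim r at_top sequentially"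
    unfolding filterlim_at_top
  proof
    fix Z :: real
    obtain n where "Z / r 0 < \<gamma> ^ n" using real_arch_pow[OF \<open>1 < \<gamma>\<close>] by blast
    then have "Z \<le> r 0 * \<gamma> ^ n" using \<open>0 < r 0\<close> by (simp add: field_simps)
    moreover obtain k where "r 0 * \<gamma> ^ n \<le> r k" using power_bound by blast
    ultimately show "\<forall>\<^sub>F k' in sequentially. Z \<le> r k'"
      using inc by (intro eventually_sequentiallyI[of k]) (force simp: incseq_def)
  qed
  then show ?thesis ..
qed simp

lemma min_neg_multiplier_tendsto_zero:
  fixes G L U R :: "nat \<Rightarrow> real"
  assumes G: "G \<longlonglongrightarrow> g0" and "g0 \<le> 0" and R: "filterlim R at_top sequentially"
    and L: "\<forall>\<^sub>F i in sequentially. L i = pos (U i + R i * G i)" and U: "\<And>i. U i \<le> Umax"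
  shows "(\<lambda>i. min (- G i) (L i)) \<longlonglongrightarrow> 0"
proof (cases "g0 = 0")
  case True
  have "\<forall>\<^sub>F i in sequentially. norm (min (- G i) (L i)) \<le> \<bar>G i\<bar>"
    using L
  proof eventually_elim
    case (elim i)
    then have "0 \<le> L i" by (simp add: pos_def)
    then show ?case by auto
  qed
  moreover have "(\<lambda>i. \<bar>G i\<bar>) \<longlonglongrightarrow> 0"
    using tendsto_rabs[OF G] True by simp
  ultimately show ?thesis by (rule Lim_null_comparison)
next
  case False
  with \<open>g0 \<le> 0\<close> have "g0 < 0" by simp
  have "\<forall>\<^sub>F i in sequentially. G i < g0 / 2"
    using order_tendstoD(2)[OF G, of "g0 / 2"] \<open>g0 < 0\<close> by simp
  moreover have "\<forall>\<^sub>F i in sequentially. max 0 (2 * Umax / - g0) \<le> R i"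
    using R unfolding filterlim_at_top by blast
  ultimately have "\<forall>\<^sub>F i in sequentially. min (- G i) (L i) = 0"
    using L
  proof eventually_elim
    case (elim i)
    then have "0 \<le> R i" "2 * Umax \<le> R i * - g0"
      using \<open>g0 < 0\<close> pos_divide_le_eq[of "- g0" "2 * Umax" "R i"] by auto
    have "R i * G i \<le> R i * (g0 / 2)"
      using elim \<open>0 \<le> R i\<close> by (intro mult_left_mono) auto
    also have "\<dots> \<le> - Umax"
      using \<open>2 * Umax \<le> R i * - g0\<close> by (simp add: algebra_simps)
    finally have "L i = 0"
      using elim U[of i] by (simp add: pos_def)
    then show ?case using elim \<open>g0 < 0\<close> by simp
  qed
  then show ?thesis by (rule tendsto_eventually)
qed

lemma complementarity_tendsto_zero:
  fixes g :: "nat \<Rightarrow> 'a::t2_space \<Rightarrow> real" and x :: "nat \<Rightarrow> 'a"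
    and lam u :: "nat \<Rightarrow> nat \<Rightarrow> real" and rho :: "nat \<Rightarrow> real" and m :: nat
  defines "B k \<equiv> bnorm {..<m} (\<lambda>j. min (- g j (x k)) (lam k j))"
  assumes cont: "\<And>j. j < m \<Longrightarrow> isCont (g j) xbar"
    and "0 \<le> \<tau>" "\<tau> < 1" "1 < \<gamma>" "0 < rho 0"
    and lam_upd: "\<And>k j. j < m \<Longrightarrow> lam (Suc k) j = pos (u k j + rho k * g j (x (Suc k)))"
    and rho_upd: "\<And>k. rho (Suc k) = (if B (Suc k) \<le> \<tau> * B k then rho k else \<gamma> * rho k)"
    and u_bound: "\<And>k j. j < m \<Longrightarrow> u k j \<le> U j"
    and s: "strict_mono s" and conv: "(\<lambda>i. x (s i)) \<longlonglongrightarrow> xbar"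
    and feasible: "\<And>j. j < m \<Longrightarrow> g j xbar \<le> 0"
  shows "(\<lambda>i. B (s i)) \<longlonglongrightarrow> 0"
  using penalty_update_eventually_const_or_at_top[of rho \<gamma>, OF \<open>0 < rho 0\<close> \<open>1 < \<gamma>\<close> rho_upd]
proof
  assume "\<exists>k0. \<forall>k\<ge>k0. B (Suc k) \<le> \<tau> * B k"
  then obtain k0 where "\<And>k. k \<ge> k0 \<Longrightarrow> B (Suc k) \<le> \<tau> * B k" by blast
  then have "B \<longlonglongrightarrow> 0"
    unfolding B_def
    by (rule tendsto_zero_of_eventually_contracting[OF bnorm_nonneg \<open>0 \<le> \<tau>\<close> \<open>\<tau> < 1\<close>])
  from LIMSEQ_subseq_LIMSEQ[OF this s] show ?thesis by (simp add: o_def)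
next
  assume "filterlim rho at_top sequentially"
  then have rho_at_top: "filterlim (\<lambda>i. rho (s i - 1)) at_top sequentially"
    using filterlim_compose[OF filterlim_minus_const_nat_at_top filterlim_subseq[OF s]]
    by (rule filterlim_compose)
  have s_Suc: "\<forall>\<^sub>F i in sequentially. s i = Suc (s i - 1)"
  proof (rule eventually_sequentiallyI[of 1])
    fix i :: nat assume "1 \<le> i"
    then show "s i = Suc (s i - 1)" using seq_suble[OF s, of i] by simp
  qed
  show ?thesis
    unfolding B_def
  proof (rule tendsto_bnorm_zero)
    fix j assume "j \<in> {..<m}"
    show "(\<lambda>i. min (- g j (x (s i))) (lam (s i) j)) \<longlonglongrightarrow> 0"
    proof (rule min_neg_multiplier_tendsto_zero[where Umax = "U j"])
      show "(\<lambda>i. g j (x (s i))) \<longlonglongrightarrow> g j xbar"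
        using isCont_tendsto_compose[OF cont conv] \<open>j \<in> {..<m}\<close> by simp
      show "\<forall>\<^sub>F i in sequentially.
          lam (s i) j = pos (u (s i - 1) j + rho (s i - 1) * g j (x (s i)))"
        using s_Suc by eventually_elim (metis lam_upd \<open>j \<in> {..<m}\<close> lessThan_iff)
    qed (use rho_at_top u_bound feasible \<open>j \<in> {..<m}\<close> in simp_all)
  qed simp
qed

theorem lemma4p5:
  fixes \<theta> :: "'p::finite \<Rightarrow> real^'n \<Rightarrow> real"
    and own :: "'n \<Rightarrow> 'p"
    and m p :: "'p \<Rightarrow> nat"
    and g h :: "'p \<Rightarrow> nat \<Rightarrow> real^'n \<Rightarrow> real"
    and x :: "nat \<Rightarrow> real^'n"
    and lam mu u :: "nat \<Rightarrow> 'p \<Rightarrow> nat \<Rightarrow> real"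
    and rho :: "nat \<Rightarrow> 'p \<Rightarrow> real"
    and umax :: "'p \<Rightarrow> nat \<Rightarrow> real"
    and tau gam :: "'p \<Rightarrow> real"
    and eps eps' :: "nat \<Rightarrow> real"
    and s :: "nat \<Rightarrow> nat"
    and xbar :: "real^'n"
  assumes C1_theta: "\<forall>\<nu>. C1_fun (\<theta> \<nu>)"
    and C1_g: "\<forall>\<nu>. \<forall>j<m \<nu>. C1_fun (g \<nu> j)"
    and C1_h: "\<forall>\<nu>. \<forall>j<p \<nu>. C1_fun (h \<nu> j)"
    and umax_nonneg: "\<forall>\<nu>. \<forall>j<m \<nu>. 0 \<le> umax \<nu> j"
    and tau: "\<forall>\<nu>. 0 < tau \<nu> \<and> tau \<nu> < 1"
    and gam: "\<forall>\<nu>. 1 < gam \<nu>"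
    and rho0: "\<forall>\<nu>. 0 < rho 0 \<nu>"
    and lam_upd: "\<forall>k \<nu>. \<forall>j<m \<nu>.
        lam (Suc k) \<nu> j = pos (u k \<nu> j + rho k \<nu> * g \<nu> j (x (Suc k)))"
    and rho_upd: "\<forall>k \<nu>. rho (Suc k) \<nu> =
        (if bnorm {..<m \<nu>} (\<lambda>j. min (- g \<nu> j (x (Suc k))) (lam (Suc k) \<nu> j))
              \<le> tau \<nu> * bnorm {..<m \<nu>} (\<lambda>j. min (- g \<nu> j (x k)) (lam k \<nu> j))
         then rho k \<nu> else gam \<nu> * rho k \<nu>)"
    and u_upd: "\<forall>k \<nu>. \<forall>j<m \<nu>. u (Suc k) \<nu> j = min (lam (Suc k) \<nu> j) (umax \<nu> j)"
    and inexact_grad: "\<forall>k \<nu>. bnorm {i. own i = \<nu>}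
        (\<lambda>i. pgrad (\<lambda>y. aug_lag (\<theta> \<nu>) (m \<nu>) (g \<nu>) y (u k \<nu>) (rho k \<nu>)) (x (Suc k)) i
            + (\<Sum>j<p \<nu>. pgrad (h \<nu> j) (x (Suc k)) i * mu (Suc k) \<nu> j)) \<le> eps k"
    and inexact_compl: "\<forall>k \<nu>. bnorm {..<p \<nu>} (\<lambda>j. min (- h \<nu> j (x (Suc k))) (mu (Suc k) \<nu> j)) \<le> eps' k"
    and eps_nonneg: "\<forall>k. 0 \<le> eps k"
    and eps_dec: "decseq eps"
    and eps_lim: "eps \<longlonglongrightarrow> 0"
    and eps'_lim: "eps' \<longlonglongrightarrow> 0"
    and subseq: "strict_mono s"
    and conv: "(\<lambda>i. x (s i)) \<longlonglongrightarrow> xbar"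
    and feasible: "\<forall>\<nu>. (\<forall>j<m \<nu>. g \<nu> j xbar \<le> 0) \<and> (\<forall>j<p \<nu>. h \<nu> j xbar \<le> 0)"
  shows "\<forall>\<nu>.
     (\<lambda>i. bnorm {c. own c = \<nu>} (\<lambda>c. pgrad (\<theta> \<nu>) (x (s i)) c
          + (\<Sum>j<m \<nu>. pgrad (g \<nu> j) (x (s i)) c * lam (s i) \<nu> j)
          + (\<Sum>j<p \<nu>. pgrad (h \<nu> j) (x (s i)) c * mu (s i) \<nu> j))) \<longlonglongrightarrow> 0
   \<and> (\<lambda>i. bnorm {..<m \<nu>} (\<lambda>j. min (- g \<nu> j (x (s i))) (lam (s i) \<nu> j))) \<longlonglongrightarrow> 0
   \<and> (\<lambda>i. bnorm {..<p \<nu>} (\<lambda>j. min (- h \<nu> j (x (s i))) (mu (s i) \<nu> j))) \<longlonglongrightarrow> 0"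
proof (intro allI conjI, goal_cases)
  case (1 \<nu>)
  have rho_pos: "0 < rho k \<nu>" for k
    using penalty_update_pos[OF rho0[rule_format] gam[rule_format] rho_upd[rule_format]] .
  show ?case
    by (rule subseq_tendsto_zero_of_Suc_le[OF bnorm_nonneg _ eps_lim subseq])
      (use inexact_grad[rule_format, where \<nu> = \<nu>] in
        \<open>simp add: pgrad_aug_lag C1_fun_differentiable C1_theta C1_g rho_pos lam_upd\<close>)
next
  case (2 \<nu>)
  \<comment> \<open>the initial u^0 is arbitrary, not capped by umax\<close>
  have u_bound: "u k \<nu> j \<le> max (u 0 \<nu> j) (umax \<nu> j)" if "j < m \<nu>" for k j
    using u_upd that by (cases k) auto
  show ?case
    by (rule complementarity_tendsto_zero[where g = "g \<nu>" and lam = "\<lambda>k. lam k \<nu>"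
        and u = "\<lambda>k. u k \<nu>" and rho = "\<lambda>k. rho k \<nu>" and \<tau> = "tau \<nu>" and \<gamma> = "gam \<nu>",
        OF _ _ _ _ _ _ rho_upd[rule_format] u_bound subseq conv])
      (use C1_g C1_fun_isCont tau[rule_format, of \<nu>] gam rho0 lam_upd feasible in auto)
next
  case (3 \<nu>)
  show ?case
    using inexact_compl[rule_format]
    by (rule subseq_tendsto_zero_of_Suc_le[OF bnorm_nonneg _ eps'_lim subseq])
qed

end
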